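(* Let $p$ be an odd prime and let $\mathcal{A}=(G_x,G_e,G_{xy})$ be a finite, primitive amalgam of degree $(p,2)$. If $q$ is a prime dividing $|G_{xy}|$, then $q<p$.
   Context: An amalgam $(A_1,A_2,B,\pi_1,\pi_2)$ consists of groups with monomorphisms $\pi_i:B\to A_i$; here $G_{xy}$ is identified with its images in $G_x$ and $G_e$. Degree $(p,2)$ means $|G_x:G_{xy}|=p$ and $|G_e:G_{xy}|=2$; finite means $G_{xy}$ is finite; primitive means the only subgroup of $G_{xy}$ normal in both $G_x$ and $G_e$ is trivial. *)

theory Defs
  imports "HOL-Algebra.Algebra"
begin

text \<open>An amalgam (A1, A2, B, pi1, pi2): groups with monomorphisms pi_i : B \<rightarrow> A_i.
  Here A1 plays the role of G_x, A2 of G_e and B of G_xy.\<close>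
definition amalgam :: "'a monoid \<Rightarrow> 'b monoid \<Rightarrow> 'c monoid \<Rightarrow> ('c \<Rightarrow> 'a) \<Rightarrow> ('c \<Rightarrow> 'b) \<Rightarrow> bool" where
  "amalgam A1 A2 B pi1 pi2 \<longleftrightarrow>
     group A1 \<and> group A2 \<and> group B \<and> pi1 \<in> mon B A1 \<and> pi2 \<in> mon B A2"

text \<open>Index of a subset H in G: number of right cosets (0 if infinite).\<close>
definition grp_index :: "('a, 'm) monoid_scheme \<Rightarrow> 'a set \<Rightarrow> nat" where
  "grp_index G H = card (rcosets\<^bsub>G\<^esub> H)"

definition amalgam_degree :: "'a monoid \<Rightarrow> 'b monoid \<Rightarrow> 'c monoid \<Rightarrow> ('c \<Rightarrow> 'a) \<Rightarrow> ('c \<Rightarrow> 'b) \<Rightarrow> nat \<Rightarrow> nat \<Rightarrow> bool" where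
  "amalgam_degree A1 A2 B pi1 pi2 m n \<longleftrightarrow>
     grp_index A1 (pi1 ` carrier B) = m \<and> grp_index A2 (pi2 ` carrier B) = n"

definition amalgam_finite :: "'c monoid \<Rightarrow> bool" where
  "amalgam_finite B \<longleftrightarrow> finite (carrier B)"

definition amalgam_primitive :: "'a monoid \<Rightarrow> 'b monoid \<Rightarrow> 'c monoid \<Rightarrow> ('c \<Rightarrow> 'a) \<Rightarrow> ('c \<Rightarrow> 'b) \<Rightarrow> bool" where
  "amalgam_primitive A1 A2 B pi1 pi2 \<longleftrightarrow>
     (\<forall>K. subgroup K B \<and> pi1 ` K \<lhd> A1 \<and> pi2 ` K \<lhd> A2 \<longrightarrow> K = {\<one>\<^bsub>B\<^esub>})"

end

theory Submission
  imports Defs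
begin

(*
  Let H1 = pi1(G_xy) and H2 = pi2(G_xy), of index p in G_x and 2 in G_e, and
  suppose q >= p.  Let S be the set of q-elements of G_xy (elements of q-power order) and
  K the subgroup they generate.  We show that pi1(K) and pi2(K) are normal, so primitivity
  forces K = 1, while Cauchy theorem gives a nontrivial q-element: contradiction.

  The group-theoretic core is a pigeonhole argument on right cosets: if g lies in a subgroup
  H of finite index n and x lies outside H, then the cosets H x g^i (0 <= i < n) cannot all
  be distinct non-trivial cosets, so x g^m x^-1 lies in H for some 0 < m < n.  For n = 2 this
  yields normality of index-2 subgroups; for n <= q and g a q-element it shows, via Bezout,
  that every conjugate of g lies in H.  The subgroup generated by a conjugation-closed set is
  normal, and images of q-elements under monomorphisms are exactly the q-elements of the image;
  together these give the normality of pi1(K) and pi2(K).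
*)


definition q_elements :: "('a, 'm) monoid_scheme \<Rightarrow> nat \<Rightarrow> 'a set" where
  "q_elements G q = {g \<in> carrier G. \<exists>k::nat. g [^]\<^bsub>G\<^esub> (q ^ k) = \<one>\<^bsub>G\<^esub>}"

lemma (in group) conj_nat_pow:
  assumes "x \<in> carrier G" "g \<in> carrier G"
  shows "(x \<otimes> g \<otimes> inv x) [^] (n::nat) = x \<otimes> g [^] n \<otimes> inv x"
proof (induction n)
  case 0
  then show ?case using assms by (simp add: r_inv)
next
  case (Suc n)
  have "(x \<otimes> g \<otimes> inv x) [^] Suc n = (x \<otimes> g [^] n \<otimes> inv x) \<otimes> (x \<otimes> g \<otimes> inv x)"
    using Suc by simp
  also have "\<dots> = x \<otimes> (g [^] n \<otimes> g) \<otimes> inv x"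
    using assms by (simp add: m_assoc) (simp add: m_assoc[symmetric])
  finally show ?case by simp
qed

lemma (in group) q_elements_conj:
  assumes "g \<in> q_elements G q" "x \<in> carrier G"
  shows "x \<otimes> g \<otimes> inv x \<in> q_elements G q"
proof -
  obtain k where "g \<in> carrier G" "g [^] (q ^ k) = \<one>"
    using assms(1) by (auto simp: q_elements_def)
  then have "(x \<otimes> g \<otimes> inv x) [^] (q ^ k) = \<one>"
    using assms(2) by (simp add: conj_nat_pow)
  then show ?thesis
    using assms by (auto simp: q_elements_def)
qed

text \<open>If a power y^m of a q-element y lies in H and q does not divide m, then y itself lies
  in H: by Bezout, y is a power of y^m.\<close>
lemma (in group) q_element_in_subgroup_of_coprime_power:
  assumes H: "subgroup H G" and y: "y \<in> q_elements G q" and q: "Factorial_Ring.prime q"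
    and m: "y [^] m \<in> H" "\<not> q dvd m"
  shows "y \<in> H"
proof -
  obtain k where yc: "y \<in> carrier G" and yk: "y [^] (q ^ k) = \<one>"
    using y by (auto simp: q_elements_def)
  have "coprime q m"
    using m(2) q by (simp add: prime_imp_coprime_nat)
  then have "coprime m (q ^ k)"
    by (simp add: coprime_commute)
  moreover have "m \<noteq> 0" using m(2) by (metis dvd_0_right)
  ultimately obtain a b where ab: "m * a = q ^ k * b + 1"
    using bezout_nat[of m "q ^ k"] by auto
  have "y = (y [^] (q ^ k)) [^] b \<otimes> y"
    using yk yc by simp
  also have "\<dots> = (y [^] m) [^] a"
    using yc by (simp add: nat_pow_pow nat_pow_mult ab)
  also have "\<dots> \<in> H"
    using subgroup_int_pow_closed[OF H m(1), of "int a"] by (simp add: int_pow_int)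
  finally show ?thesis .
qed

lemma (in group) rcos_eq_imp_mem:
  assumes "subgroup H G" "a \<in> carrier G" "b \<in> carrier G" "H #> a = H #> b"
  shows "a \<otimes> inv b \<in> H"
  using assms repr_independenceD subgroup.rcos_module_imp is_group by metis

text \<open>Pigeonhole on cosets: for g in H and x outside H, the cosets H x g^i for i below the
  index are non-trivial, so two of them coincide, i.e. some conjugate x g^m x^-1 with
  0 < m < index lies in H.\<close>
lemma (in group) conj_power_returns:
  assumes H: "subgroup H G" and fin: "finite (rcosets H)"
    and g: "g \<in> H" and x: "x \<in> carrier G" "x \<notin> H"
  shows "\<exists>m. 0 < m \<and> m < card (rcosets H) \<and> x \<otimes> g [^] m \<otimes> inv x \<in> H"
proof (rule ccontr)
  assume none: "\<nexists>m. 0 < m \<and> m < card (rcosets H) \<and> x \<otimes> g [^] m \<otimes> inv x \<in> H"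
  have gc: "g \<in> carrier G" using g subgroup.mem_carrier[OF H] by blast
  define C where "C i = H #> (x \<otimes> g [^] i)" for i :: nat
  have C_rcosets: "C i \<in> rcosets H - {H}" for i
  proof -
    have "x \<otimes> g [^] i \<notin> H"
    proof
      assume "x \<otimes> g [^] i \<in> H"
      moreover have "g [^] i \<in> H"
        using subgroup_int_pow_closed[OF H g, of "int i"] by (simp add: int_pow_int)
      ultimately have "(x \<otimes> g [^] i) \<otimes> inv (g [^] i) \<in> H"
        using H by (simp add: subgroup.m_closed subgroup.m_inv_closed)
      then show False using x gc by (simp add: m_assoc)
    qed
    then show ?thesis
      unfolding C_def using rcosetsI[OF subgroup.subset[OF H]] rcos_self[OF _ H] x gc
      by (metis DiffI m_closed nat_pow_closed singletonD)
  qed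
  have C_distinct: "C i \<noteq> C j" if "i < j" "j < card (rcosets H)" for i j
  proof
    assume "C i = C j"
    then have "(x \<otimes> g [^] i) \<otimes> inv (x \<otimes> g [^] j) \<in> H"
      unfolding C_def using rcos_eq_imp_mem[OF H] x gc by simp
    then have "inv ((x \<otimes> g [^] i) \<otimes> inv (x \<otimes> g [^] j)) \<in> H"
      using H by (simp add: subgroup.m_inv_closed)
    moreover have "inv ((x \<otimes> g [^] i) \<otimes> inv (x \<otimes> g [^] j)) = x \<otimes> g [^] (j - i) \<otimes> inv x"
    proof -
      have "g [^] j = g [^] (j - i) \<otimes> g [^] i"
        using that gc by (simp add: nat_pow_mult)
      then show ?thesis
        using x gc by (simp add: inv_mult_group m_assoc)
    qed
    moreover have "0 < j - i" "j - i < card (rcosets H)"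
      using that by auto
    ultimately show False
      using none by (metis (no_types, lifting))
  qed
  have "inj_on C {..<card (rcosets H)}"
    by (intro inj_onI) (metis C_distinct lessThan_iff linorder_neqE_nat)
  moreover have "C ` {..<card (rcosets H)} \<subseteq> rcosets H - {H}"
    using C_rcosets by blast
  ultimately have "card (rcosets H) \<le> card (rcosets H - {H})"
    using card_inj_on_le fin by fastforce
  moreover have "H \<in> rcosets H"
    using subgroup.subgroup_in_rcosets[OF H is_group] .
  then have "card (rcosets H - {H}) < card (rcosets H)"
    by (rule card_Diff1_less[OF fin])
  ultimately show False
    by linarith
qed

text \<open>Subgroups of index 2 are normal (the pigeonhole lemma with m forced to be 1).\<close>
lemma (in group) index_two_normal:
  assumes H: "subgroup H G" and two: "card (rcosets H) = 2"
  shows "H \<lhd> G"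
proof (rule normal_invI[OF H])
  fix x h assume x: "x \<in> carrier G" and h: "h \<in> H"
  show "x \<otimes> h \<otimes> inv x \<in> H"
  proof (cases "x \<in> H")
    case True
    then show ?thesis using h H by (simp add: subgroup.m_closed subgroup.m_inv_closed)
  next
    case False
    have "finite (rcosets H)" using two card.infinite by fastforce
    then obtain m :: nat where "0 < m" "m < 2" "x \<otimes> h [^] m \<otimes> inv x \<in> H"
      using conj_power_returns[OF H _ h x False] two by auto
    moreover have "h \<in> carrier G" using h subgroup.mem_carrier[OF H] by blast
    ultimately show ?thesis by (simp add: numeral_2_eq_2 less_Suc_eq)
  qed
qed

lemma (in group) small_index_q_elements_conj:
  assumes H: "subgroup H G" and fin: "finite (rcosets H)" and q: "Factorial_Ring.prime q"
    and small: "card (rcosets H) \<le> q"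
    and g: "g \<in> H" "g \<in> q_elements G q" and x: "x \<in> carrier G"
  shows "x \<otimes> g \<otimes> inv x \<in> H"
proof (cases "x \<in> H")
  case True
  then show ?thesis using g H by (simp add: subgroup.m_closed subgroup.m_inv_closed)
next
  case False
  then obtain m where m: "0 < m" "m < card (rcosets H)" "x \<otimes> g [^] m \<otimes> inv x \<in> H"
    using conj_power_returns[OF H fin g(1) x] by blast
  have "(x \<otimes> g \<otimes> inv x) [^] m \<in> H"
    using m(3) x g(2) by (simp add: q_elements_def conj_nat_pow)
  moreover have "\<not> q dvd m"
    using m small by (auto dest: dvd_imp_le)
  ultimately show ?thesis
    using q_element_in_subgroup_of_coprime_power[OF H q_elements_conj[OF g(2) x] q] by blast
qed

lemma (in group_hom) image_q_elements:
  assumes inj: "inj_on h (carrier G)"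
  shows "h ` q_elements G q = h ` carrier G \<inter> q_elements H q"
proof -
  have "h g [^]\<^bsub>H\<^esub> n = \<one>\<^bsub>H\<^esub> \<longleftrightarrow> g [^]\<^bsub>G\<^esub> n = \<one>\<^bsub>G\<^esub>"
    if "g \<in> carrier G" for g and n :: nat
    using that inj inj_onD[OF inj, of "g [^]\<^bsub>G\<^esub> n" "\<one>\<^bsub>G\<^esub>"]
    by (auto simp flip: hom_nat_pow)
  then show ?thesis
    by (auto simp: q_elements_def)
qed

lemma q_elements_generate_normal:
  assumes f: "group_hom B A f" and inj: "inj_on f (carrier B)"
    and conj: "\<And>x h. x \<in> carrier A \<Longrightarrow> h \<in> f ` carrier B \<Longrightarrow> h \<in> q_elements A q
                 \<Longrightarrow> x \<otimes>\<^bsub>A\<^esub> h \<otimes>\<^bsub>A\<^esub> inv\<^bsub>A\<^esub> x \<in> f ` carrier B"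
  shows "f ` generate B (q_elements B q) \<lhd> A"
proof -
  interpret f: group_hom B A f by (rule f)
  have S: "q_elements B q \<subseteq> carrier B" by (auto simp: q_elements_def)
  have "generate A (f ` carrier B \<inter> q_elements A q) \<lhd> A"
  proof (rule f.H.normal_generateI)
    show "f ` carrier B \<inter> q_elements A q \<subseteq> carrier A"
      by (auto simp: q_elements_def)
  next
    fix h x assume "h \<in> f ` carrier B \<inter> q_elements A q" "x \<in> carrier A"
    then show "x \<otimes>\<^bsub>A\<^esub> h \<otimes>\<^bsub>A\<^esub> inv\<^bsub>A\<^esub> x \<in> f ` carrier B \<inter> q_elements A q"
      using conj f.H.q_elements_conj by blast
  qed
  then show ?thesis
    using f.generate_img[OF S] f.image_q_elements[OF inj] by simp
qed

lemma (in group) exists_q_element: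
  assumes fin: "finite (carrier G)" and q: "Factorial_Ring.prime q" and dvd: "q dvd order G"
  shows "\<exists>g \<in> q_elements G q. g \<noteq> \<one>"
proof -
  have "order G = q ^ 1 * (order G div q)" using dvd by simp
  then obtain P where P: "subgroup P G" "card P = q ^ 1"
    using sylow_thm[OF q is_group _ fin] by blast
  have "P \<noteq> {\<one>}" using P prime_gt_1_nat[OF q] by auto
  then obtain g where gP: "g \<in> P" and g1: "g \<noteq> \<one>"
    using subgroup.one_closed[OF P(1)] by blast
  interpret P: group "G\<lparr>carrier := P\<rparr>"
    using subgroup.subgroup_is_group[OF P(1) is_group] .
  have "g [^]\<^bsub>G\<lparr>carrier := P\<rparr>\<^esub> order (G\<lparr>carrier := P\<rparr>) = \<one>\<^bsub>G\<lparr>carrier := P\<rparr>\<^esub>"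
    using P.pow_order_eq_1 gP by simp
  then have "g [^] (q ^ 1) = \<one>"
    using P(2) by (simp add: order_def nat_pow_def)
  moreover have "g \<in> carrier G" using gP subgroup.subset[OF P(1)] by blast
  ultimately show ?thesis
    using g1 unfolding q_elements_def by blast
qed

lemma q_generated_subgroup_trivial:
  assumes amalgam: "amalgam A1 A2 B pi1 pi2"
    and primitive: "amalgam_primitive A1 A2 B pi1 pi2"
    and degree: "amalgam_degree A1 A2 B pi1 pi2 p 2"
    and p: "Factorial_Ring.prime p" and q: "Factorial_Ring.prime q" and pq: "p \<le> q"
  shows "generate B (q_elements B q) = {\<one>\<^bsub>B\<^esub>}"
proof -
  interpret A1: group A1 using amalgam by (simp add: amalgam_def)
  interpret A2: group A2 using amalgam by (simp add: amalgam_def)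
  interpret B: group B using amalgam by (simp add: amalgam_def)
  have hom1: "group_hom B A1 pi1" and inj1: "inj_on pi1 (carrier B)"
    and hom2: "group_hom B A2 pi2" and inj2: "inj_on pi2 (carrier B)"
    using amalgam by (auto simp: amalgam_def mon_def group_hom_def group_hom_axioms_def)
  have sub1: "subgroup (pi1 ` carrier B) A1" and sub2: "subgroup (pi2 ` carrier B) A2"
    using group_hom.img_is_subgroup[OF hom1] group_hom.img_is_subgroup[OF hom2] .
  have idx1: "card (rcosets\<^bsub>A1\<^esub> (pi1 ` carrier B)) = p"
    and idx2: "card (rcosets\<^bsub>A2\<^esub> (pi2 ` carrier B)) = 2"
    using degree by (auto simp: amalgam_degree_def grp_index_def)
  have fin1: "finite (rcosets\<^bsub>A1\<^esub> (pi1 ` carrier B))"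
    using idx1 p by (metis card.infinite not_prime_0)
  have "pi1 ` generate B (q_elements B q) \<lhd> A1"
  proof (rule q_elements_generate_normal[OF hom1 inj1])
    fix x h assume "x \<in> carrier A1" "h \<in> pi1 ` carrier B" "h \<in> q_elements A1 q"
    then show "x \<otimes>\<^bsub>A1\<^esub> h \<otimes>\<^bsub>A1\<^esub> inv\<^bsub>A1\<^esub> x \<in> pi1 ` carrier B"
      using A1.small_index_q_elements_conj[OF sub1 fin1 q] idx1 pq by simp
  qed
  moreover have "pi2 ` carrier B \<lhd> A2"
    using A2.index_two_normal[OF sub2 idx2] .
  then have "pi2 ` generate B (q_elements B q) \<lhd> A2"
    by (rule q_elements_generate_normal[OF hom2 inj2 normal.inv_op_closed2])
  moreover have "subgroup (generate B (q_elements B q)) B"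
    by (rule B.generate_is_subgroup) (auto simp: q_elements_def)
  ultimately show ?thesis
    using primitive by (simp add: amalgam_primitive_def)
qed

theorem mainTheorem4:
  fixes A1 :: "'a monoid" and A2 :: "'b monoid" and B :: "'c monoid"
    and pi1 :: "'c \<Rightarrow> 'a" and pi2 :: "'c \<Rightarrow> 'b" and p q :: nat
  assumes "Factorial_Ring.prime p" and "odd p"
    and "amalgam A1 A2 B pi1 pi2"
    and "amalgam_finite B"
    and "amalgam_primitive A1 A2 B pi1 pi2"
    and "amalgam_degree A1 A2 B pi1 pi2 p 2"
    and "Factorial_Ring.prime q" and "q dvd order B"
  shows "q < p"
proof (rule ccontr)
  assume "\<not> q < p"
  then have trivial: "generate B (q_elements B q) = {\<one>\<^bsub>B\<^esub>}"
    using q_generated_subgroup_trivial[OF assms(3,5,6,1,7)] by simp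
  interpret B: group B using assms(3) by (simp add: amalgam_def)
  obtain g where "g \<in> q_elements B q" "g \<noteq> \<one>\<^bsub>B\<^esub>"
    using B.exists_q_element assms(4,7,8) unfolding amalgam_finite_def by blast
  then show False
    using trivial generate.incl[of g "q_elements B q" B] by simp
qed

end
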